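(* Let $\mathbf{X}\in\mathbb{R}^{M\times N_x}$, $\mathbf{Y}\in\mathbb{R}^{M\times N_y}$ with $\mathbf{C}\mathbf{X}\neq0$, $\mathbf{C}\mathbf{Y}\neq0$, and let $\mathbf{K}_X=\mathbf{C}\mathbf{X}\mathbf{X}^\top\mathbf{C}$, $\mathbf{K}_Y=\mathbf{C}\mathbf{Y}\mathbf{Y}^\top\mathbf{C}$. Then $$\frac{\mathrm{CKA}(\mathbf{K}_X,\mathbf{K}_Y)}{\sqrt{\operatorname{rank}(\mathbf{K}_X)\operatorname{rank}(\mathbf{K}_Y)}}\le \mathrm{NBS}(\mathbf{K}_X,\mathbf{K}_Y)^2\le \min\big(\operatorname{rank}(\mathbf{K}_X),\operatorname{rank}(\mathbf{K}_Y)\big)\,\mathrm{CKA}(\mathbf{K}_X,\mathbf{K}_Y).$$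
   Context: $\mathbf{C}=\mathbf{I}-\tfrac1M\mathbf{1}\mathbf{1}^\top$ is the $M\times M$ centering matrix. For PSD $\mathbf{A}$, $\mathbf{A}^{1/2}$ is its unique PSD square root; the fidelity is $\mathcal{F}(\mathbf{A},\mathbf{B})=\operatorname{Tr}[(\mathbf{A}^{1/2}\mathbf{B}\mathbf{A}^{1/2})^{1/2}]$ and the normalized Bures similarity is $\mathrm{NBS}(\mathbf{A},\mathbf{B})=\mathcal{F}(\mathbf{A},\mathbf{B})/\sqrt{\operatorname{Tr}\mathbf{A}\operatorname{Tr}\mathbf{B}}$. Centered kernel alignment is $\mathrm{CKA}(\mathbf{A},\mathbf{B})=\operatorname{Tr}[\mathbf{A}\mathbf{B}]/\sqrt{\operatorname{Tr}[\mathbf{A}^2]\operatorname{Tr}[\mathbf{B}^2]}$. *)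

theory Defs
  imports "HOL-Analysis.Analysis"
begin

definition centering :: "real^'m^'m" where
  "centering = mat 1 - (1 / real CARD('m)) *\<^sub>R (\<chi> i j. 1)"

definition psd :: "real^'m^'m \<Rightarrow> bool" where
  "psd A \<longleftrightarrow> transpose A = A \<and> (\<forall>x. 0 \<le> x \<bullet> (A *v x))"

definition mat_sqrt :: "real^'m^'m \<Rightarrow> real^'m^'m" where
  "mat_sqrt A = (THE S. psd S \<and> S ** S = A)"

definition fidelity :: "real^'m^'m \<Rightarrow> real^'m^'m \<Rightarrow> real" where
  "fidelity A B = trace (mat_sqrt (mat_sqrt A ** B ** mat_sqrt A))"

definition NBS :: "real^'m^'m \<Rightarrow> real^'m^'m \<Rightarrow> real" where
  "NBS A B = fidelity A B / sqrt (trace A * trace B)"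

definition CKA :: "real^'m^'m \<Rightarrow> real^'m^'m \<Rightarrow> real" where
  "CKA A B = trace (A ** B) / sqrt (trace (A ** A) * trace (B ** B))"

end

theory Submission
  imports Defs
begin

(* A symmetric matrix is diagonal in an orthonormal eigenbasis (obtained by maximising the Rayleigh
   quotient on invariant subspaces), so a PSD matrix R with eigenvalues \<lambda> \<ge> 0 satisfies
   tr (R\<^sup>2) = \<Sum>\<lambda>\<^sup>2 \<le> (\<Sum>\<lambda>)\<^sup>2 = (tr R)\<^sup>2 \<le> rank R \<cdot> \<Sum>\<lambda>\<^sup>2, the last step by Cauchy-Schwarz over
   the nonzero eigenvalues. For R = (A^(1/2) B A^(1/2))^(1/2) we have tr R = F(A,B), tr (R\<^sup>2) = tr (AB) and
   rank R \<le> min (rank A) (rank B), whence tr (AB) \<le> F(A,B)\<^sup>2 \<le> min (rank A) (rank B) \<cdot> tr (AB).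
   For R = A itself the same inequalities read \<parallel>A\<parallel>\<^sub>F \<le> tr A \<le> \<surd>(rank A) \<parallel>A\<parallel>\<^sub>F, which converts
   the normalisation of NBS into that of CKA. Centred Gram matrices C X X\<^sup>T C = (CX)(CX)\<^sup>T are PSD,
   and nonzero when CX \<noteq> 0. *)

section \<open>Spectral sums over orthonormal bases\<close>

definition orthonormal_basis :: "(real^'n) set \<Rightarrow> bool" where
  "orthonormal_basis B \<longleftrightarrow> pairwise orthogonal B \<and> (\<forall>b\<in>B. norm b = 1) \<and> span B = UNIV"

definition spectral_sum :: "(real^'n) set \<Rightarrow> (real^'n \<Rightarrow> real) \<Rightarrow> real^'n^'n" where
  "spectral_sum B l = (\<chi> r s. \<Sum>b\<in>B. l b * b $ r * b $ s)"

lemma orthonormal_basis_finite: "orthonormal_basis B \<Longrightarrow> finite B"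
  unfolding orthonormal_basis_def by (blast intro: pairwise_orthogonal_imp_finite)

lemma orthonormal_basis_inner:
  assumes "orthonormal_basis B" "b \<in> B" "c \<in> B"
  shows "b \<bullet> c = (if b = c then 1 else 0)"
  using assms unfolding orthonormal_basis_def pairwise_def orthogonal_def
  by (auto simp: norm_eq_1)

lemma orthonormal_basis_sum_inner:
  fixes v :: "real^'n \<Rightarrow> 'a::real_vector"
  assumes "orthonormal_basis B" "c \<in> B"
  shows "(\<Sum>b\<in>B. (b \<bullet> c) *\<^sub>R v b) = v c"
proof -
  have "(\<Sum>b\<in>B. (b \<bullet> c) *\<^sub>R v b) = (\<Sum>b\<in>B. if b = c then v c else 0)"
    using assms by (intro sum.cong) (auto simp: orthonormal_basis_inner)
  then show ?thesis using assms by (simp add: orthonormal_basis_finite)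
qed

lemma orthonormal_basis_expansion:
  assumes "orthonormal_basis B"
  shows "(\<Sum>b\<in>B. (b \<bullet> x) *\<^sub>R b) = x"
  using orthonormal_basis_expand[of B x] assms orthonormal_basis_finite[OF assms]
  by (simp add: orthonormal_basis_def inner_commute)

lemma orthonormal_basis_independent: "orthonormal_basis B \<Longrightarrow> independent B"
  unfolding orthonormal_basis_def
  by (metis norm_zero pairwise_orthogonal_independent zero_neq_one)

lemma spectral_sum_mult_vector:
  "spectral_sum B l *v x = (\<Sum>b\<in>B. (l b * (b \<bullet> x)) *\<^sub>R b)"
proof -
  have "(spectral_sum B l *v x) $ r = (\<Sum>b\<in>B. (l b * (b \<bullet> x)) *\<^sub>R b) $ r" for r
  proof -
    have "(spectral_sum B l *v x) $ r = (\<Sum>s\<in>UNIV. \<Sum>b\<in>B. l b * b $ r * b $ s * x $ s)"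
      by (simp add: spectral_sum_def matrix_vector_mult_def sum_distrib_right)
    also have "\<dots> = (\<Sum>b\<in>B. l b * b $ r * (\<Sum>s\<in>UNIV. b $ s * x $ s))"
      by (subst sum.swap) (simp add: sum_distrib_left mult.assoc)
    finally show ?thesis by (simp add: inner_vec_def mult_ac)
  qed
  then show ?thesis by (simp add: vec_eq_iff)
qed

lemma spectral_sum_cong: "(\<And>b. b \<in> B \<Longrightarrow> l b = m b) \<Longrightarrow> spectral_sum B l = spectral_sum B m"
  by (simp add: spectral_sum_def)

lemma spectral_sum_zero [simp]: "spectral_sum B (\<lambda>_. 0) = 0"
  by (simp add: spectral_sum_def vec_eq_iff)

lemma transpose_spectral_sum: "transpose (spectral_sum B l) = spectral_sum B l"
  by (simp add: spectral_sum_def transpose_def vec_eq_iff mult_ac)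

lemma spectral_sum_eigenvector:
  assumes "orthonormal_basis B" "c \<in> B"
  shows "spectral_sum B l *v c = l c *\<^sub>R c"
  using orthonormal_basis_sum_inner[OF assms, of "\<lambda>b. l b *\<^sub>R b"]
  by (simp add: spectral_sum_mult_vector inner_commute mult.commute)

lemma spectral_sum_eqI:
  assumes "orthonormal_basis B" "\<And>b. b \<in> B \<Longrightarrow> A *v b = l b *\<^sub>R b"
  shows "A = spectral_sum B l"
proof (subst matrix_eq, intro allI)
  fix x
  have "A *v x = (\<Sum>b\<in>B. (b \<bullet> x) *\<^sub>R (A *v b))"
    by (subst (1) orthonormal_basis_expansion[OF assms(1), symmetric])
       (simp add: linear_sum[OF matrix_vector_mul_linear] matrix_vector_mult_scaleR)
  also have "\<dots> = spectral_sum B l *v x"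
    using assms(2) by (simp add: spectral_sum_mult_vector mult.commute)
  finally show "A *v x = spectral_sum B l *v x" .
qed

lemma spectral_sum_mult:
  assumes "orthonormal_basis B"
  shows "spectral_sum B l ** spectral_sum B m = spectral_sum B (\<lambda>b. l b * m b)"
  using assms
  by (intro spectral_sum_eqI)
     (simp_all add: spectral_sum_eigenvector matrix_vector_mul_assoc[symmetric] matrix_vector_mult_scaleR)

lemma trace_spectral_sum:
  assumes "orthonormal_basis B"
  shows "trace (spectral_sum B l) = (\<Sum>b\<in>B. l b)"
proof -
  have "trace (spectral_sum B l) = (\<Sum>b\<in>B. l b * (b \<bullet> b))"
    by (simp add: trace_def spectral_sum_def inner_vec_def sum_distrib_left mult.assoc
        sum.swap[of _ UNIV])
  also have "\<dots> = (\<Sum>b\<in>B. l b)"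
    using assms by (intro sum.cong) (simp_all add: orthonormal_basis_inner)
  finally show ?thesis .
qed

lemma range_spectral_sum:
  assumes "orthonormal_basis B"
  shows "range ((*v) (spectral_sum B l)) = span {b\<in>B. l b \<noteq> 0}"
proof
  show "range ((*v) (spectral_sum B l)) \<subseteq> span {b\<in>B. l b \<noteq> 0}"
  proof clarify
    fix x
    have "(l b * (b \<bullet> x)) *\<^sub>R b \<in> span {b\<in>B. l b \<noteq> 0}" if "b \<in> B" for b
      using that by (cases "l b = 0") (simp_all add: span_base span_scale span_zero)
    then show "spectral_sum B l *v x \<in> span {b\<in>B. l b \<noteq> 0}"
      by (simp add: spectral_sum_mult_vector span_sum)
  qed
  have "b \<in> range ((*v) (spectral_sum B l))" if "b \<in> B" "l b \<noteq> 0" for b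
  proof
    show "b = spectral_sum B l *v (b /\<^sub>R l b)"
      using that by (simp add: matrix_vector_mult_scaleR spectral_sum_eigenvector[OF assms])
  qed simp
  moreover have "subspace (range ((*v) (spectral_sum B l)))"
    by (rule linear_subspace_image[OF matrix_vector_mul_linear subspace_UNIV])
  ultimately show "span {b\<in>B. l b \<noteq> 0} \<subseteq> range ((*v) (spectral_sum B l))"
    by (intro span_minimal) auto
qed

lemma rank_spectral_sum:
  assumes "orthonormal_basis B"
  shows "rank (spectral_sum B l) = card {b\<in>B. l b \<noteq> 0}"
proof -
  have "independent {b\<in>B. l b \<noteq> 0}"
    using orthonormal_basis_independent[OF assms] by (rule independent_mono) auto
  then show ?thesis
    by (simp add: rank_dim_range range_spectral_sum[OF assms] dim_span dim_eq_card_independent)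
qed

lemma psd_spectral_sum_iff:
  assumes "orthonormal_basis B"
  shows "psd (spectral_sum B l) \<longleftrightarrow> (\<forall>b\<in>B. 0 \<le> l b)"
proof
  assume psd: "psd (spectral_sum B l)"
  show "\<forall>b\<in>B. 0 \<le> l b"
  proof
    fix b assume "b \<in> B"
    then have "b \<bullet> (spectral_sum B l *v b) = l b"
      using assms by (simp add: spectral_sum_eigenvector orthonormal_basis_inner)
    then show "0 \<le> l b" using psd by (metis psd_def)
  qed
next
  assume "\<forall>b\<in>B. 0 \<le> l b"
  moreover have "x \<bullet> (spectral_sum B l *v x) = (\<Sum>b\<in>B. l b * (b \<bullet> x)\<^sup>2)" for x
  proof -
    have "x \<bullet> (spectral_sum B l *v x) = (\<Sum>b\<in>B. l b * (b \<bullet> x) * (x \<bullet> b))"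
      by (simp add: spectral_sum_mult_vector inner_sum_right)
    then show ?thesis by (simp add: inner_commute power2_eq_square mult.assoc)
  qed
  ultimately show "psd (spectral_sum B l)"
    by (simp add: psd_def transpose_spectral_sum sum_nonneg)
qed

section \<open>The spectral theorem for symmetric matrices\<close>

lemma inner_mult_vector_transpose: "x \<bullet> (A *v y) = (transpose A *v x) \<bullet> y"
  for A :: "real^'k^'n"
  by (simp add: dot_lmul_matrix[symmetric])

lemma symmetric_inner_mult_vector:
  fixes A :: "real^'n^'n"
  assumes "transpose A = A"
  shows "a \<bullet> (A *v b) = (A *v a) \<bullet> b"
  by (metis assms inner_mult_vector_transpose)

lemma nonneg_form_eq_0_imp_mult_vector_eq_0:
  fixes A :: "real^'n^'n"
  assumes S: "subspace S" and inv: "\<And>x. x \<in> S \<Longrightarrow> A *v x \<in> S" and sym: "transpose A = A"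
    and nonneg: "\<And>x. x \<in> S \<Longrightarrow> 0 \<le> x \<bullet> (A *v x)" and v: "v \<in> S" and zero: "v \<bullet> (A *v v) = 0"
  shows "A *v v = 0"
proof -
  define w where "w = A *v v"
  define c where "c = w \<bullet> w"
  define q where "q = w \<bullet> (A *v w)"
  have "w \<in> S" using inv v by (simp add: w_def)
  then have "q \<ge> 0" by (simp add: q_def nonneg)
  \<comment> \<open>along the line \<open>v + t w\<close> the form is \<open>2 t c + t\<^sup>2 q\<close>,
      which is negative at \<open>t = -c / (q + 1)\<close> unless \<open>c = 0\<close>\<close>
  define t where "t = - c / (q + 1)"
  have "v + t *\<^sub>R w \<in> S" using S v \<open>w \<in> S\<close> by (simp add: subspace_add subspace_scale)
  then have "0 \<le> (v + t *\<^sub>R w) \<bullet> (A *v (v + t *\<^sub>R w))" by (rule nonneg)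
  also have "\<dots> = 2 * t * c + t\<^sup>2 * q"
    using zero symmetric_inner_mult_vector[OF sym, of v w]
    by (simp add: w_def c_def q_def matrix_vector_right_distrib matrix_vector_mult_scaleR
        inner_add_left inner_add_right power2_eq_square algebra_simps)
  also have "\<dots> = - c\<^sup>2 * (q + 2) / (q + 1)\<^sup>2"
    using \<open>q \<ge> 0\<close> by (simp add: t_def field_simps power2_eq_square add_nonneg_eq_0_iff)
  finally have "c\<^sup>2 * (q + 2) \<le> 0"
    using \<open>q \<ge> 0\<close> by (simp add: divide_le_0_iff)
  with \<open>q \<ge> 0\<close> have "c = 0"
    by (smt (verit) mult_pos_pos zero_less_power2)
  then show ?thesis by (simp add: c_def w_def)
qed

lemma invariant_subspace_has_eigenvector:
  fixes A :: "real^'n^'n"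
  assumes sym: "transpose A = A" and S: "subspace S" and inv: "\<And>x. x \<in> S \<Longrightarrow> A *v x \<in> S"
    and "S \<noteq> {0}"
  shows "\<exists>v\<in>S. norm v = 1 \<and> A *v v = (v \<bullet> (A *v v)) *\<^sub>R v"
proof -
  define K where "K = sphere 0 1 \<inter> S"
  have "compact K"
    unfolding K_def by (intro compact_Int_closed compact_sphere closed_subspace S)
  obtain x where "x \<in> S" "x \<noteq> 0" using \<open>S \<noteq> {0}\<close> S subspace_0 by blast
  then have "x /\<^sub>R norm x \<in> K" using S by (simp add: K_def subspace_scale)
  moreover have "continuous_on K (\<lambda>x. x \<bullet> (A *v x))"
    by (intro continuous_intros)
  ultimately obtain v where "v \<in> K" and max: "\<And>y. y \<in> K \<Longrightarrow> y \<bullet> (A *v y) \<le> v \<bullet> (A *v v)"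
    using continuous_attains_sup[OF \<open>compact K\<close>] by blast
  define l where "l = v \<bullet> (A *v v)"
  have "v \<in> S" "norm v = 1" using \<open>v \<in> K\<close> by (auto simp: K_def)
  have rayleigh: "x \<bullet> (A *v x) \<le> l * (x \<bullet> x)" if "x \<in> S" for x
  proof (cases "x = 0")
    case False
    have "x /\<^sub>R norm x \<in> K" using False that S by (simp add: K_def subspace_scale)
    then have "(x /\<^sub>R norm x) \<bullet> (A *v (x /\<^sub>R norm x)) \<le> l" unfolding l_def by (rule max)
    then have "(x \<bullet> (A *v x)) / (norm x)\<^sup>2 \<le> l"
      by (simp add: matrix_vector_mult_scaleR power2_eq_square divide_inverse mult_ac)
    then show ?thesis using False by (simp add: divide_le_eq power2_norm_eq_inner)
  qed simp
  \<comment> \<open>\<open>l\<close> maximises the form on the unit sphere of \<open>S\<close>,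
      so \<open>l I - A\<close> is nonnegative on \<open>S\<close> and vanishes at \<open>v\<close>\<close>
  define B where "B = l *\<^sub>R mat 1 - A"
  have Bx: "B *v x = l *\<^sub>R x - A *v x" for x
    by (simp add: B_def matrix_vector_mult_diff_rdistrib scaleR_matrix_vector_assoc[symmetric])
  have "B *v v = 0"
  proof (rule nonneg_form_eq_0_imp_mult_vector_eq_0[OF S])
    show "B *v x \<in> S" if "x \<in> S" for x
      using that inv S by (simp add: Bx subspace_diff subspace_scale)
    show "transpose B = B" using sym by (simp add: B_def transpose_def vec_eq_iff mat_def)
    show "0 \<le> x \<bullet> (B *v x)" if "x \<in> S" for x
      using rayleigh[OF that] by (simp add: Bx inner_diff_right)
    show "v \<bullet> (B *v v) = 0"
      using \<open>norm v = 1\<close> by (simp add: Bx inner_diff_right l_def norm_eq_1)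
  qed (fact \<open>v \<in> S\<close>)
  then show ?thesis using \<open>v \<in> S\<close> \<open>norm v = 1\<close> by (auto simp: Bx l_def)
qed

lemma span_insert_orthogonal_complement:
  assumes "subspace S" "v \<in> S" "v \<bullet> v = 1" "span B = S \<inter> {y. orthogonal v y}"
  shows "S \<subseteq> span (insert v B)"
proof
  fix x assume "x \<in> S"
  then have "x - (v \<bullet> x) *\<^sub>R v \<in> span B"
    using assms by (simp add: orthogonal_def subspace_diff subspace_scale inner_diff_right)
  then have "x - (v \<bullet> x) *\<^sub>R v \<in> span (insert v B)"
    using span_mono[of B "insert v B"] by blast
  moreover have "(v \<bullet> x) *\<^sub>R v \<in> span (insert v B)"
    by (simp add: span_base span_scale)
  ultimately have "(x - (v \<bullet> x) *\<^sub>R v) + (v \<bullet> x) *\<^sub>R v \<in> span (insert v B)"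
    by (rule span_add)
  then show "x \<in> span (insert v B)" by simp
qed

lemma invariant_subspace_has_orthonormal_eigenbasis:
  fixes A :: "real^'n^'n"
  assumes sym: "transpose A = A"
  shows "subspace S \<Longrightarrow> (\<And>x. x \<in> S \<Longrightarrow> A *v x \<in> S) \<Longrightarrow>
    \<exists>B. B \<subseteq> S \<and> pairwise orthogonal B \<and> span B = S \<and>
        (\<forall>b\<in>B. norm b = 1 \<and> A *v b = (b \<bullet> (A *v b)) *\<^sub>R b)"
proof (induction "dim S" arbitrary: S rule: less_induct)
  case less
  show ?case
  proof (cases "S = {0}")
    case True
    then show ?thesis by (intro exI[of _ "{}"]) auto
  next
    case False
    obtain v where "v \<in> S" "norm v = 1" and Av: "A *v v = (v \<bullet> (A *v v)) *\<^sub>R v"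
      using invariant_subspace_has_eigenvector[OF sym less.prems False] by blast
    have "v \<bullet> v = 1" using \<open>norm v = 1\<close> by (simp add: norm_eq_1)
    define S' where "S' = S \<inter> {y. orthogonal v y}"
    have "subspace S'"
      unfolding S'_def by (rule subspace_inter[OF less.prems(1) subspace_orthogonal_to_vector])
    moreover have "A *v x \<in> S'" if "x \<in> S'" for x
    proof -
      have "v \<bullet> (A *v x) = (v \<bullet> (A *v v)) * (v \<bullet> x)"
        by (metis Av inner_scaleR_left symmetric_inner_mult_vector[OF sym])
      then show ?thesis using that less.prems(2) by (simp add: S'_def orthogonal_def)
    qed
    moreover have "dim S' < dim S"
    proof (rule dim_psubset)
      have "v \<notin> S'" using \<open>v \<bullet> v = 1\<close> by (simp add: S'_def orthogonal_def)
      then have "S' \<subset> S" using \<open>v \<in> S\<close> by (auto simp: S'_def)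
      then show "span S' \<subset> span S"
        using \<open>subspace S'\<close> less.prems(1) by (simp add: span_eq_iff[THEN iffD2])
    qed
    ultimately obtain B' where B': "B' \<subseteq> S'" "pairwise orthogonal B'" "span B' = S'"
        "\<forall>b\<in>B'. norm b = 1 \<and> A *v b = (b \<bullet> (A *v b)) *\<^sub>R b"
      using less.hyps by blast
    have "S \<subseteq> span (insert v B')"
      using \<open>v \<in> S\<close> \<open>v \<bullet> v = 1\<close> B'(3) unfolding S'_def
      by (rule span_insert_orthogonal_complement[OF less.prems(1)])
    moreover have "insert v B' \<subseteq> S"
      using B'(1) \<open>v \<in> S\<close> by (auto simp: S'_def)
    then have "span (insert v B') \<subseteq> S"
      using less.prems(1) by (rule span_minimal)
    moreover have "pairwise orthogonal (insert v B')"
      using B'(1,2) by (auto simp: pairwise_insert S'_def orthogonal_commute)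
    moreover have "\<forall>b\<in>insert v B'. norm b = 1 \<and> A *v b = (b \<bullet> (A *v b)) *\<^sub>R b"
      using B'(4) \<open>norm v = 1\<close> Av by blast
    ultimately show ?thesis
      using \<open>insert v B' \<subseteq> S\<close> by blast
  qed
qed

theorem symmetric_matrix_spectral_sum:
  fixes A :: "real^'n^'n"
  assumes "transpose A = A"
  obtains B l where "orthonormal_basis B" "A = spectral_sum B l"
proof -
  obtain B where "pairwise orthogonal B" "span B = UNIV"
    and eig: "\<forall>b\<in>B. norm b = 1 \<and> A *v b = (b \<bullet> (A *v b)) *\<^sub>R b"
    using invariant_subspace_has_orthonormal_eigenbasis[OF assms, of UNIV] by auto
  then have "orthonormal_basis B" by (simp add: orthonormal_basis_def)
  then show ?thesis
    using eig by (intro that spectral_sum_eqI) auto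
qed

section \<open>Square roots and trace inequalities of PSD matrices\<close>

lemma psd_imp_symmetric: "psd A \<Longrightarrow> transpose A = A"
  by (simp add: psd_def)

lemma psd_spectral_sum:
  fixes A :: "real^'n^'n"
  assumes "psd A"
  obtains B l where "orthonormal_basis B" "A = spectral_sum B l" "\<And>b. b \<in> B \<Longrightarrow> 0 \<le> l b"
proof -
  obtain B l where "orthonormal_basis B" "A = spectral_sum B l"
    using symmetric_matrix_spectral_sum[OF psd_imp_symmetric[OF assms]] by blast
  with assms show ?thesis using psd_spectral_sum_iff that by blast
qed

lemma psd_form_eq_0_imp_mult_vector_eq_0: "psd A \<Longrightarrow> v \<bullet> (A *v v) = 0 \<Longrightarrow> A *v v = 0"
  by (rule nonneg_form_eq_0_imp_mult_vector_eq_0[of UNIV]) (auto simp: psd_def)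

lemma psd_sqrt_exists:
  fixes A :: "real^'n^'n"
  assumes "psd A"
  shows "\<exists>S. psd S \<and> S ** S = A"
proof -
  obtain B l where B: "orthonormal_basis B" and A: "A = spectral_sum B l"
    and l: "\<And>b. b \<in> B \<Longrightarrow> 0 \<le> l b"
    using psd_spectral_sum[OF assms] by blast
  have "spectral_sum B (\<lambda>b. sqrt (l b)) ** spectral_sum B (\<lambda>b. sqrt (l b)) = A"
    unfolding A spectral_sum_mult[OF B] using l by (intro spectral_sum_cong) simp
  moreover have "psd (spectral_sum B (\<lambda>b. sqrt (l b)))"
    using l by (simp add: psd_spectral_sum_iff[OF B])
  ultimately show ?thesis by blast
qed

lemma transpose_diff: "transpose (A - B) = transpose A - transpose B"
  for A B :: "real^'k^'n"
  by (simp add: transpose_def vec_eq_iff)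

lemma psd_sqrt_unique:
  fixes S T :: "real^'n^'n"
  assumes S: "psd S" and T: "psd T" and eq: "S ** S = T ** T"
  shows "S = T"
proof -
  have "transpose (S - T) = S - T"
    using psd_imp_symmetric[OF S] psd_imp_symmetric[OF T] by (simp add: transpose_diff)
  then obtain B m where B: "orthonormal_basis B" and D: "S - T = spectral_sum B m"
    by (rule symmetric_matrix_spectral_sum)
  have "m b = 0" if "b \<in> B" for b
  proof (rule ccontr)
    assume "m b \<noteq> 0"
    define a c where "a = S *v b" and "c = T *v b"
    have diff: "a - c = m b *\<^sub>R b"
      using spectral_sum_eigenvector[OF B that, of m]
      by (simp add: a_def c_def D[symmetric] matrix_vector_mult_diff_rdistrib)
    \<comment> \<open>\<open>S b\<close> and \<open>T b\<close> have the same length since \<open>b \<bullet> S\<^sup>2 b = b \<bullet> T\<^sup>2 b\<close>\<close>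
    have "a \<bullet> a = c \<bullet> c"
      using symmetric_inner_mult_vector[OF psd_imp_symmetric[OF S], of b a]
        symmetric_inner_mult_vector[OF psd_imp_symmetric[OF T], of b c]
      by (simp add: a_def c_def matrix_vector_mul_assoc eq)
    moreover have "(a - c) \<bullet> (a + c) = a \<bullet> a - c \<bullet> c"
      by (simp add: algebra_simps inner_commute)
    ultimately have "m b * (b \<bullet> a + b \<bullet> c) = 0"
      by (simp add: diff inner_add_right distrib_left)
    moreover have "0 \<le> b \<bullet> a" "0 \<le> b \<bullet> c"
      using S T by (simp_all add: psd_def a_def c_def)
    ultimately have "b \<bullet> a = 0" "b \<bullet> c = 0"
      using \<open>m b \<noteq> 0\<close> by auto
    then have "a = 0" "c = 0"
      using psd_form_eq_0_imp_mult_vector_eq_0[OF S, of b]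
        psd_form_eq_0_imp_mult_vector_eq_0[OF T, of b]
      by (simp_all add: a_def c_def)
    moreover have "b \<noteq> 0" using B that unfolding orthonormal_basis_def by force
    ultimately show False using diff \<open>m b \<noteq> 0\<close> by simp
  qed
  then have "S - T = spectral_sum B (\<lambda>_. 0)" unfolding D by (rule spectral_sum_cong)
  then show ?thesis by simp
qed

lemma psd_mat_sqrt:
  assumes "psd A"
  shows "psd (mat_sqrt A)" and "mat_sqrt A ** mat_sqrt A = A"
proof -
  have "\<exists>!S. psd S \<and> S ** S = A"
    using psd_sqrt_exists[OF assms] psd_sqrt_unique by blast
  then have "psd (mat_sqrt A) \<and> mat_sqrt A ** mat_sqrt A = A"
    unfolding mat_sqrt_def by (rule theI')
  then show "psd (mat_sqrt A)" and "mat_sqrt A ** mat_sqrt A = A" by auto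
qed

lemma rank_square_symmetric:
  fixes A :: "real^'n^'n"
  assumes "transpose A = A"
  shows "rank (A ** A) = rank A"
proof -
  obtain B l where B: "orthonormal_basis B" and A: "A = spectral_sum B l"
    using symmetric_matrix_spectral_sum[OF assms] by blast
  show ?thesis by (simp add: A spectral_sum_mult[OF B] rank_spectral_sum[OF B])
qed

lemma trace_power2_le_rank_mult_trace_square:
  fixes A :: "real^'n^'n"
  assumes "transpose A = A"
  shows "(trace A)\<^sup>2 \<le> real (rank A) * trace (A ** A)"
proof -
  obtain B l where B: "orthonormal_basis B" and A: "A = spectral_sum B l"
    using symmetric_matrix_spectral_sum[OF assms] by blast
  define Z where "Z = {b\<in>B. l b \<noteq> 0}"
  have "trace A = (\<Sum>b\<in>Z. l b)"
    unfolding A trace_spectral_sum[OF B] Z_def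
    by (rule sum.mono_neutral_right) (auto simp: orthonormal_basis_finite[OF B])
  moreover have "trace (A ** A) = (\<Sum>b\<in>Z. (l b)\<^sup>2)"
    unfolding A spectral_sum_mult[OF B] trace_spectral_sum[OF B] Z_def power2_eq_square
    by (rule sum.mono_neutral_right) (auto simp: orthonormal_basis_finite[OF B])
  moreover have "rank A = card Z" by (simp add: A Z_def rank_spectral_sum[OF B])
  ultimately show ?thesis
    using sum_squared_le_sum_of_squares[of l Z] by (simp add: mult.commute)
qed

lemma psd_trace_square_le_power2:
  assumes "psd A"
  shows "trace (A ** A) \<le> (trace A)\<^sup>2"
proof -
  obtain B l where B: "orthonormal_basis B" and A: "A = spectral_sum B l"
    and l: "\<And>b. b \<in> B \<Longrightarrow> 0 \<le> l b"
    using psd_spectral_sum[OF assms] by blast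
  have "(\<Sum>b\<in>B. l b * l b) \<le> (\<Sum>b\<in>B. l b * (\<Sum>c\<in>B. l c))"
    using l orthonormal_basis_finite[OF B]
    by (intro sum_mono mult_left_mono member_le_sum) auto
  then show ?thesis
    by (simp add: A spectral_sum_mult[OF B] trace_spectral_sum[OF B] power2_eq_square
        sum_distrib_right)
qed

lemma psd_trace_nonneg:
  assumes "psd A"
  shows "0 \<le> trace A"
proof -
  obtain B l where B: "orthonormal_basis B" and A: "A = spectral_sum B l"
    and l: "\<And>b. b \<in> B \<Longrightarrow> 0 \<le> l b"
    using psd_spectral_sum[OF assms] by blast
  show ?thesis using l by (simp add: A trace_spectral_sum[OF B] sum_nonneg)
qed

lemma psd_trace_pos:
  assumes "psd A" "A \<noteq> 0"
  shows "0 < trace A"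
proof -
  obtain B l where B: "orthonormal_basis B" and A: "A = spectral_sum B l"
    and l: "\<And>b. b \<in> B \<Longrightarrow> 0 \<le> l b"
    using psd_spectral_sum[OF assms(1)] by blast
  have "\<exists>c\<in>B. l c \<noteq> 0"
  proof (rule ccontr)
    assume "\<not> (\<exists>c\<in>B. l c \<noteq> 0)"
    then have "A = spectral_sum B (\<lambda>_. 0)" unfolding A by (intro spectral_sum_cong) auto
    with assms(2) show False by simp
  qed
  then obtain c where "c \<in> B" "0 < l c" using l by force
  moreover have "l c \<le> trace A"
    using \<open>c \<in> B\<close> l orthonormal_basis_finite[OF B]
    unfolding A trace_spectral_sum[OF B] by (intro member_le_sum) auto
  ultimately show ?thesis by linarith
qed

section \<open>Fidelity, NBS and CKA\<close>

lemma psd_congruence: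
  fixes S B :: "real^'n^'n"
  assumes "transpose S = S" "psd B"
  shows "psd (S ** B ** S)"
  unfolding psd_def
proof
  show "transpose (S ** B ** S) = S ** B ** S"
    using assms by (simp add: psd_def matrix_transpose_mul matrix_mul_assoc)
  show "\<forall>x. 0 \<le> x \<bullet> ((S ** B ** S) *v x)"
  proof
    fix x
    have "x \<bullet> ((S ** B ** S) *v x) = (S *v x) \<bullet> (B *v (S *v x))"
      using symmetric_inner_mult_vector[OF assms(1), of x]
      by (simp add: matrix_vector_mul_assoc[symmetric])
    then show "0 \<le> x \<bullet> ((S ** B ** S) *v x)" using assms(2) by (simp add: psd_def)
  qed
qed

lemma trace_mat_sqrt_congruence:
  assumes "psd A"
  shows "trace (mat_sqrt A ** B ** mat_sqrt A) = trace (A ** B)"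
  using trace_mul_sym[of "mat_sqrt A ** B" "mat_sqrt A"]
  by (simp add: matrix_mul_assoc psd_mat_sqrt(2)[OF assms])

lemma psd_trace_mult_nonneg:
  assumes "psd A" "psd B"
  shows "0 \<le> trace (A ** B)"
  using psd_trace_nonneg[OF psd_congruence[OF psd_imp_symmetric[OF psd_mat_sqrt(1)] assms(2)]]
  by (simp add: trace_mat_sqrt_congruence assms)

lemma fidelity_power2_bounds:
  assumes A: "psd A" and B: "psd B"
  shows "trace (A ** B) \<le> (fidelity A B)\<^sup>2"
    and "(fidelity A B)\<^sup>2 \<le> real (min (rank A) (rank B)) * trace (A ** B)"
proof -
  define P where "P = mat_sqrt A ** B ** mat_sqrt A"
  define R where "R = mat_sqrt P"
  have "transpose (mat_sqrt A) = mat_sqrt A"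
    using psd_imp_symmetric[OF psd_mat_sqrt(1)[OF A]] .
  then have "psd P" unfolding P_def using B by (rule psd_congruence)
  then have "psd R" "R ** R = P" unfolding R_def by (rule psd_mat_sqrt)+
  have trace_P: "trace P = trace (A ** B)"
    unfolding P_def by (rule trace_mat_sqrt_congruence[OF A])
  have fidelity: "fidelity A B = trace R" by (simp add: fidelity_def R_def P_def)
  show "trace (A ** B) \<le> (fidelity A B)\<^sup>2"
    using psd_trace_square_le_power2[OF \<open>psd R\<close>] by (simp add: fidelity \<open>R ** R = P\<close> trace_P)
  have "rank R = rank P"
    using rank_square_symmetric[OF psd_imp_symmetric[OF \<open>psd R\<close>]] \<open>R ** R = P\<close> by simp
  moreover have "rank (mat_sqrt A) = rank A"
    using rank_square_symmetric[OF \<open>transpose (mat_sqrt A) = mat_sqrt A\<close>]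
    by (simp add: psd_mat_sqrt(2)[OF A])
  then have "rank P \<le> min (rank A) (rank B)"
    using rank_mul_le_left[of "mat_sqrt A ** B" "mat_sqrt A"] rank_mul_le_left[of "mat_sqrt A" B]
      rank_mul_le_right[of "mat_sqrt A" B]
    by (simp add: P_def)
  ultimately have "(fidelity A B)\<^sup>2 \<le> real (rank P) * trace P"
    using trace_power2_le_rank_mult_trace_square[OF psd_imp_symmetric[OF \<open>psd R\<close>]] \<open>R ** R = P\<close>
    by (simp add: fidelity)
  also have "\<dots> \<le> real (min (rank A) (rank B)) * trace P"
    using \<open>rank P \<le> min (rank A) (rank B)\<close> psd_trace_nonneg[OF \<open>psd P\<close>]
    by (intro mult_right_mono) auto
  finally show "(fidelity A B)\<^sup>2 \<le> real (min (rank A) (rank B)) * trace (A ** B)"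
    by (simp add: trace_P)
qed

lemma psd_frobenius_norm_le_trace:
  assumes "psd A"
  shows "sqrt (trace (A ** A)) \<le> trace A"
  using real_sqrt_le_mono[OF psd_trace_square_le_power2[OF assms]] psd_trace_nonneg[OF assms]
  by simp

lemma trace_le_sqrt_rank_mult_frobenius_norm:
  assumes "transpose A = A"
  shows "trace A \<le> sqrt (real (rank A)) * sqrt (trace (A ** A))"
proof -
  have "trace A \<le> sqrt ((trace A)\<^sup>2)" by simp
  also have "\<dots> \<le> sqrt (real (rank A) * trace (A ** A))"
    using trace_power2_le_rank_mult_trace_square[OF assms] by (rule real_sqrt_le_mono)
  finally show ?thesis by (simp add: real_sqrt_mult)
qed

lemma CKA_NBS_bounds:
  fixes A B :: "real^'n^'n"
  assumes A: "psd A" "A \<noteq> 0" and B: "psd B" "B \<noteq> 0"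
  shows "CKA A B / sqrt (real (rank A) * real (rank B)) \<le> (NBS A B)\<^sup>2
       \<and> (NBS A B)\<^sup>2 \<le> real (min (rank A) (rank B)) * CKA A B"
proof -
  define a b t F
    where "a = trace A" and "b = trace B" and "t = trace (A ** B)" and "F = fidelity A B"
  define nA nB where "nA = sqrt (trace (A ** A))" and "nB = sqrt (trace (B ** B))"
  define rA rB m where "rA = sqrt (real (rank A))" and "rB = sqrt (real (rank B))"
    and "m = real (min (rank A) (rank B))"
  have "0 < a" "0 < b" using psd_trace_pos A B by (simp_all add: a_def b_def)
  have "0 \<le> t" "t \<le> F\<^sup>2" "F\<^sup>2 \<le> m * t"
    using psd_trace_mult_nonneg[OF A(1) B(1)] fidelity_power2_bounds[OF A(1) B(1)]
    by (simp_all add: t_def F_def m_def)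
  have "nA \<le> a" "a \<le> rA * nA" "nB \<le> b" "b \<le> rB * nB"
    using psd_frobenius_norm_le_trace A(1) B(1)
      trace_le_sqrt_rank_mult_frobenius_norm[OF psd_imp_symmetric[OF A(1)]]
      trace_le_sqrt_rank_mult_frobenius_norm[OF psd_imp_symmetric[OF B(1)]]
    by (simp_all add: a_def b_def nA_def nB_def rA_def rB_def)
  have "0 \<le> nA" "0 \<le> nB"
    using psd_trace_mult_nonneg A(1) B(1) by (simp_all add: nA_def nB_def)
  then have "0 < nA" "0 < nB"
    using \<open>0 < a\<close> \<open>a \<le> rA * nA\<close> \<open>0 < b\<close> \<open>b \<le> rB * nB\<close> by (auto simp: order_less_le)
  have CKA: "CKA A B = t / (nA * nB)" by (simp add: CKA_def t_def nA_def nB_def real_sqrt_mult)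
  have NBS: "(NBS A B)\<^sup>2 = F\<^sup>2 / (a * b)"
    using \<open>0 < a\<close> \<open>0 < b\<close> by (simp add: NBS_def F_def a_def b_def power_divide)
  have "CKA A B / sqrt (real (rank A) * real (rank B)) = t / ((rA * nA) * (rB * nB))"
    by (simp add: CKA rA_def rB_def real_sqrt_mult mult_ac)
  also have "\<dots> \<le> t / (a * b)"
    using \<open>0 \<le> t\<close> \<open>0 < a\<close> \<open>0 < b\<close> \<open>a \<le> rA * nA\<close> \<open>b \<le> rB * nB\<close>
    by (intro divide_left_mono mult_mono) auto
  also have "\<dots> \<le> (NBS A B)\<^sup>2"
    using \<open>t \<le> F\<^sup>2\<close> \<open>0 < a\<close> \<open>0 < b\<close> by (simp add: NBS divide_right_mono)
  finally have lower: "CKA A B / sqrt (real (rank A) * real (rank B)) \<le> (NBS A B)\<^sup>2" .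
  have "(NBS A B)\<^sup>2 \<le> m * t / (a * b)"
    using \<open>F\<^sup>2 \<le> m * t\<close> \<open>0 < a\<close> \<open>0 < b\<close> by (simp add: NBS divide_right_mono)
  also have "\<dots> \<le> m * t / (nA * nB)"
    using \<open>0 \<le> t\<close> \<open>F\<^sup>2 \<le> m * t\<close> \<open>0 < nA\<close> \<open>0 < nB\<close> \<open>nA \<le> a\<close> \<open>nB \<le> b\<close>
    by (intro divide_left_mono mult_mono) (auto intro: order_trans[OF zero_le_power2])
  finally show ?thesis using lower by (simp add: CKA m_def)
qed

lemma gram_form: "x \<bullet> ((N ** transpose N) *v x) = (transpose N *v x) \<bullet> (transpose N *v x)"
  for N :: "real^'k^'n"
  by (simp only: matrix_vector_mul_assoc[symmetric] inner_mult_vector_transpose)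

lemma psd_gram: "psd (N ** transpose N)"
  for N :: "real^'k^'n"
  by (simp add: psd_def matrix_transpose_mul gram_form)

lemma gram_eq_0_iff: "N ** transpose N = 0 \<longleftrightarrow> N = 0"
  for N :: "real^'k^'n"
proof
  assume "N ** transpose N = 0"
  then have "transpose N *v x = 0" for x using gram_form[of x N] by simp
  then have "transpose N = 0" by (simp add: matrix_eq)
  then show "N = 0" by (simp add: transpose_def vec_eq_iff)
qed (simp add: matrix_matrix_mult_def vec_eq_iff)

lemma transpose_centering: "transpose centering = centering"
  by (simp add: centering_def transpose_def vec_eq_iff mat_def)

lemma centered_gram:
  "centering ** N ** transpose N ** centering = (centering ** N) ** transpose (centering ** N)"
  by (simp add: matrix_transpose_mul transpose_centering matrix_mul_assoc)

theorem mainTheorem4: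
  fixes X :: "real^'nx^'m" and Y :: "real^'ny^'m"
    and KX KY :: "real^'m^'m"
  assumes "centering ** X \<noteq> 0" and "centering ** Y \<noteq> 0"
    and "KX = centering ** X ** transpose X ** centering"
    and "KY = centering ** Y ** transpose Y ** centering"
  shows "CKA KX KY / sqrt (real (rank KX) * real (rank KY)) \<le> (NBS KX KY)\<^sup>2
       \<and> (NBS KX KY)\<^sup>2 \<le> real (min (rank KX) (rank KY)) * CKA KX KY"
proof (rule CKA_NBS_bounds)
  show "psd KX" "psd KY" unfolding assms(3,4) centered_gram by (rule psd_gram)+
  show "KX \<noteq> 0" "KY \<noteq> 0" unfolding assms(3,4) centered_gram gram_eq_0_iff by (fact assms(1,2))+
qed

end
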